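(* For $n\ge2$ and $1\le\ell\le n-1$, let $t_{n,\ell}$ be the number of permutations $\sigma$ of $\{1,\dots,n\}$ avoiding both $1243$ and $1324$ such that $\sigma^{-1}(n)-\sigma^{-1}(1)=1$ (i.e., $1$ is immediately to the left of $n$) and $\sigma(1)=\ell$. Then for $n\ge3$, \[ t_{n,1}=t_{n,2}=2^{n-3}\quad\text{and}\quad t_{n,n-2}=t_{n,n-1}=\sum_{\ell=1}^{n-2}t_{n-1,\ell}. \]
   Context: A permutation avoids a pattern $p$ if no subsequence of its one-line notation is order-isomorphic to $p$. *)

theory Defs
  imports Main
begin

definition perms_of :: "nat \<Rightarrow> nat list set" where
  "perms_of n = {s. distinct s \<and> set s = {1..n}}"

definition contains :: "nat list \<Rightarrow> nat list \<Rightarrow> bool" where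
  "contains s p \<longleftrightarrow> (\<exists>idx :: nat \<Rightarrow> nat.
      (\<forall>a<length p. idx a < length s) \<and>
      (\<forall>a b. a < b \<and> b < length p \<longrightarrow> idx a < idx b) \<and>
      (\<forall>a<length p. \<forall>b<length p. (s ! idx a < s ! idx b \<longleftrightarrow> p ! a < p ! b)))"

definition avoids :: "nat list \<Rightarrow> nat list \<Rightarrow> bool" where
  "avoids s p \<longleftrightarrow> \<not> contains s p"

text \<open>Position (0-based) of value v in s; s ! (pos s v) = v when v is in s.\<close>
definition pos :: "nat list \<Rightarrow> nat \<Rightarrow> nat" where
  "pos s v = (LEAST i. i < length s \<and> s ! i = v)"

definition t :: "nat \<Rightarrow> nat \<Rightarrow> nat" where
  "t n l = card {s \<in> perms_of n. avoids s [1,2,4,3] \<and> avoids s [1,3,2,4] \<and>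
                  pos s n = pos s 1 + 1 \<and> s ! 0 = l}"

end

theory Submission
  imports Defs "HOL-Library.Sublist"
begin

(* A list x # s avoids 1243 and 1324 iff s does and the entries of s larger than x avoid
   132 and 213, because 1243 and 1324 are 1 followed by shifted copies of 132 and 213; in
   particular avoiding 132 and 213 implies avoiding 1243 and 1324.

   In a permutation of {1..m} avoiding 132 and 213 the maximum m is either the first entry or
   immediately follows m - 1, and both insertions preserve avoidance.  Deleting m is therefore
   two-to-one onto the permutations of {1..m-1} avoiding 132 and 213, so there are 2^(m-1).

   In the permutations counted by t n l the entry 1 is immediately followed by n.  For l = 1
   they are 1 n w, counted iff w avoids 132 and 213: this gives 2^(n-3).  For l = 2 they are
   2 a 1 n b, counted iff a n b avoids 132 and 213, since the minimum can be inserted into such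
   a list anywhere without creating 1243 or 1324: again 2^(n-3).  For l >= n - 2 at most two
   entries exceed l, so the first entry imposes no condition, and deleting it and
   standardising the rest yields every permutation of {1..n-1} with 1 immediately before n - 1;
   these are counted by the sum of t (n - 1) l over their first entries l. *)

section \<open>Subsequences\<close>

lemma set_mono_subseq: "subseq xs ys \<Longrightarrow> set xs \<subseteq> set ys"
  by (induction rule: list_emb.induct) auto

lemma subseq_indexE:
  assumes "subseq u s"
  obtains f where "\<And>i j. i < j \<Longrightarrow> j < length u \<Longrightarrow> f i < f j"
    and "\<And>i. i < length u \<Longrightarrow> f i < length s \<and> u ! i = s ! f i"
proof -
  from assms have "\<exists>f. (\<forall>i j. i < j \<longrightarrow> j < length u \<longrightarrow> f i < f j) \<and>
      (\<forall>i<length u. f i < length s \<and> u ! i = s ! f i)"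
  proof (induction rule: list_emb.induct)
    case (list_emb_Nil s)
    then show ?case by auto
  next
    case (list_emb_Cons u s y)
    then obtain f where "\<forall>i j. i < j \<longrightarrow> j < length u \<longrightarrow> f i < f j"
      "\<forall>i<length u. f i < length s \<and> u ! i = s ! f i" by blast
    then show ?case by (intro exI[of _ "Suc \<circ> f"]) auto
  next
    case (list_emb_Cons2 x y u s)
    then obtain f where f: "\<forall>i j. i < j \<longrightarrow> j < length u \<longrightarrow> f i < f j"
      "\<forall>i<length u. f i < length s \<and> u ! i = s ! f i" by blast
    show ?case
      by (rule exI[of _ "case_nat 0 (Suc \<circ> f)"])
        (use f list_emb_Cons2.hyps in \<open>auto simp: nth_Cons' split: nat.split\<close>)
  qed
  with that show thesis by blast
qed

lemma subseq_map_nth: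
  assumes "sorted_wrt (<) is" and "set is \<subseteq> {..<length s}"
  shows "subseq (map ((!) s) is) s"
proof -
  have "is = filter (\<lambda>i. i \<in> set is) [0..<length s]"
    using assms
    by (intro sorted_distinct_set_unique) (auto simp: strict_sorted_iff intro: sorted_wrt_filter)
  then have "subseq (map ((!) s) is) (map ((!) s) [0..<length s])"
    by (metis subseq_filter_left subseq_map)
  then show ?thesis by (simp add: map_nth)
qed

lemma subseq_Cons_append: "x \<in> set xs \<Longrightarrow> subseq u ys \<Longrightarrow> subseq (x # u) (xs @ ys)"
  using list_emb_append_mono[of "(=)" "[x]" xs u ys] by (simp add: subseq_singleton_left)

lemma subseq_removeAll:
  assumes "subseq u s" and "x \<notin> set u"
  shows "subseq u (removeAll x s)"
proof -
  have "subseq (filter ((\<noteq>) x) u) (filter ((\<noteq>) x) s)" using assms(1) by (rule subseq_filter)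
  moreover have "filter ((\<noteq>) x) u = u" using assms(2) by (auto intro: filter_True)
  ultimately show ?thesis by (simp add: removeAll_filter_not_eq)
qed

lemma subseq_Cons_split: "subseq (x # u) (xs @ x # ys) \<Longrightarrow> x \<notin> set xs \<Longrightarrow> subseq u ys"
  by (induction xs) auto

lemma subseq_snoc_split: "subseq (u @ [x]) (xs @ x # ys) \<Longrightarrow> x \<notin> set ys \<Longrightarrow> subseq u xs"
proof (induction xs arbitrary: u)
  case Nil
  then show ?case by (cases u) (auto split: if_splits dest!: set_mono_subseq)
next
  case (Cons y xs)
  then show ?case by (cases u) (auto simp: list_emb_code split: if_splits)
qed

lemma sublist_map_inj: "inj f \<Longrightarrow> sublist (map f xs) (map f ys) \<longleftrightarrow> sublist xs ys"
  by (metis map_mono_sublist sublist_map_rightE inj_map_eq_map)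


section \<open>Pattern containment\<close>

definition order_isomorphic :: "nat list \<Rightarrow> nat list \<Rightarrow> bool" where
  "order_isomorphic u p \<longleftrightarrow> length u = length p \<and>
     (\<forall>a<length p. \<forall>b<length p. u ! a < u ! b \<longleftrightarrow> p ! a < p ! b)"

lemma order_isomorphic_length: "order_isomorphic u p \<Longrightarrow> length u = length p"
  by (simp add: order_isomorphic_def)

lemma order_isomorphic_Cons:
  "order_isomorphic (x # u) (y # q) \<longleftrightarrow> order_isomorphic u q \<and>
     (\<forall>i<length q. (x < u ! i \<longleftrightarrow> y < q ! i) \<and> (u ! i < x \<longleftrightarrow> q ! i < y))"
  unfolding order_isomorphic_def by (auto simp: All_less_Suc2)

lemma order_isomorphic_ConsE:
  assumes "order_isomorphic u (y # q)"
  obtains a u' where "u = a # u'" and "order_isomorphic u' q"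
    and "\<forall>i<length q. (a < u' ! i \<longleftrightarrow> y < q ! i) \<and> (u' ! i < a \<longleftrightarrow> q ! i < y)"
  using assms by (cases u) (auto simp: order_isomorphic_Cons order_isomorphic_def[of "[]"])

lemma contains_iff_subseq: "contains s p \<longleftrightarrow> (\<exists>u. subseq u s \<and> order_isomorphic u p)"
proof
  assume "contains s p"
  then obtain idx where bound: "\<forall>a<length p. idx a < length s"
    and mono: "\<forall>a b. a < b \<and> b < length p \<longrightarrow> idx a < idx b"
    and iso: "\<forall>a<length p. \<forall>b<length p. s ! idx a < s ! idx b \<longleftrightarrow> p ! a < p ! b"
    unfolding contains_def by blast
  let ?is = "map idx [0..<length p]"
  have "subseq (map ((!) s) ?is) s"
    using bound mono by (intro subseq_map_nth) (auto simp: sorted_wrt_iff_nth_less)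
  moreover have "order_isomorphic (map ((!) s) ?is) p"
    using iso by (simp add: order_isomorphic_def)
  ultimately show "\<exists>u. subseq u s \<and> order_isomorphic u p" by blast
next
  assume "\<exists>u. subseq u s \<and> order_isomorphic u p"
  then obtain u f where iso: "order_isomorphic u p"
    and mono: "\<And>i j. i < j \<Longrightarrow> j < length u \<Longrightarrow> f i < f j"
    and f: "\<And>i. i < length u \<Longrightarrow> f i < length s \<and> u ! i = s ! f i"
    by (metis subseq_indexE)
  show "contains s p"
    unfolding contains_def
    using iso mono f by (intro exI[of _ f]) (auto simp: order_isomorphic_def)
qed

lemma contains_subseq: "contains s p \<Longrightarrow> subseq s s' \<Longrightarrow> contains s' p"
  by (meson contains_iff_subseq subseq_order.order_trans)

lemma contains_length: "contains s p \<Longrightarrow> length p \<le> length s"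
  unfolding contains_iff_subseq order_isomorphic_def by (metis list_emb_length)

lemma contains_trans:
  assumes "contains s q" and "contains q p"
  shows "contains s p"
proof -
  obtain f where "\<forall>a<length q. f a < length s" "\<forall>a b. a < b \<and> b < length q \<longrightarrow> f a < f b"
    "\<forall>a<length q. \<forall>b<length q. s ! f a < s ! f b \<longleftrightarrow> q ! a < q ! b"
    using assms(1) unfolding contains_def by blast
  moreover obtain g where "\<forall>a<length p. g a < length q" "\<forall>a b. a < b \<and> b < length p \<longrightarrow> g a < g b"
    "\<forall>a<length p. \<forall>b<length p. q ! g a < q ! g b \<longleftrightarrow> p ! a < p ! b"
    using assms(2) unfolding contains_def by blast
  ultimately show ?thesis
    unfolding contains_def by (intro exI[of _ "f \<circ> g"]) auto
qed

lemma contains_map: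
  assumes "strict_mono_on (set s) f"
  shows "contains (map f s) p \<longleftrightarrow> contains s p"
  unfolding contains_def using strict_mono_on_less[OF assms] by (auto 0 4 intro!: ex_cong)

lemma contains_map_pattern:
  assumes "strict_mono_on (set p) f"
  shows "contains s (map f p) \<longleftrightarrow> contains s p"
  unfolding contains_def using strict_mono_on_less[OF assms] by (auto 0 4 intro!: ex_cong)

lemma contains_Cons_min:
  assumes "\<forall>v\<in>set q. y < v"
  shows "contains (x # s) (y # q) \<longleftrightarrow> contains s (y # q) \<or> contains (filter ((<) x) s) q"
proof
  assume "contains (x # s) (y # q)"
  then obtain u where sub: "subseq u (x # s)" and iso: "order_isomorphic u (y # q)"
    unfolding contains_iff_subseq by blast
  then obtain a u' where u: "u = a # u'" and iso': "order_isomorphic u' q"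
    and cmp: "\<forall>i<length q. a < u' ! i \<longleftrightarrow> y < q ! i"
    by (elim order_isomorphic_ConsE) blast
  show "contains s (y # q) \<or> contains (filter ((<) x) s) q"
  proof (cases "a = x")
    case True
    have "\<forall>i<length q. y < q ! i" using assms nth_mem by blast
    then have "\<forall>v\<in>set u'. x < v"
      using cmp True order_isomorphic_length[OF iso'] by (auto simp: in_set_conv_nth)
    then have "filter ((<) x) u' = u'" by (rule filter_True)
    moreover have "subseq u' s" using sub u True by simp
    ultimately have "subseq u' (filter ((<) x) s)" by (metis subseq_filter)
    then show ?thesis using iso' unfolding contains_iff_subseq by blast
  next
    case False
    then have "subseq u s" using sub u by simp
    then show ?thesis using iso unfolding contains_iff_subseq by blast
  qed
next
  assume "contains s (y # q) \<or> contains (filter ((<) x) s) q"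
  then show "contains (x # s) (y # q)"
  proof
    assume "contains s (y # q)"
    then show ?thesis by (rule contains_subseq) auto
  next
    assume "contains (filter ((<) x) s) q"
    then obtain u where sub: "subseq u (filter ((<) x) s)" and iso: "order_isomorphic u q"
      unfolding contains_iff_subseq by blast
    have "\<forall>v\<in>set u. x < v" using set_mono_subseq[OF sub] by auto
    then have "\<forall>i<length q. x < u ! i \<and> y < q ! i"
      using assms order_isomorphic_length[OF iso] by (metis nth_mem)
    then have "order_isomorphic (x # u) (y # q)"
      using iso by (auto simp: order_isomorphic_Cons)
    moreover have "subseq (x # u) (x # s)"
      using sub by (simp add: subseq_order.order_trans)
    ultimately show ?thesis unfolding contains_iff_subseq by blast
  qed
qed

lemma contains_Cons_greater:
  assumes "\<forall>v\<in>set s. v < x" and "\<exists>v\<in>set q. y < v"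
  shows "contains (x # s) (y # q) \<longleftrightarrow> contains s (y # q)"
proof
  assume "contains (x # s) (y # q)"
  then obtain u where sub: "subseq u (x # s)" and iso: "order_isomorphic u (y # q)"
    unfolding contains_iff_subseq by blast
  then obtain a u' where u: "u = a # u'" and iso': "order_isomorphic u' q"
    and cmp: "\<forall>i<length q. a < u' ! i \<longleftrightarrow> y < q ! i"
    by (elim order_isomorphic_ConsE) blast
  have "a \<noteq> x"
  proof
    assume "a = x"
    obtain i where "i < length q" "y < q ! i" using assms(2) by (auto simp: in_set_conv_nth)
    then have "x < u' ! i" "u' ! i \<in> set s"
      using cmp \<open>a = x\<close> sub u set_mono_subseq[of u' s] order_isomorphic_length[OF iso'] by auto
    then show False using assms(1) by fastforce
  qed
  then have "subseq u s" using sub u by simp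
  then show "contains s (y # q)" using iso unfolding contains_iff_subseq by blast
qed (rule contains_subseq, auto)


section \<open>The patterns 132, 213, 1243 and 1324\<close>

definition avoids_132_213 :: "nat list \<Rightarrow> bool" where
  "avoids_132_213 s \<longleftrightarrow> avoids s [1,3,2] \<and> avoids s [2,1,3]"

definition avoids_1243_1324 :: "nat list \<Rightarrow> bool" where
  "avoids_1243_1324 s \<longleftrightarrow> avoids s [1,2,4,3] \<and> avoids s [1,3,2,4]"

lemma contains_132: "contains s [1,3,2] \<longleftrightarrow> (\<exists>a b c. subseq [a,b,c] s \<and> a < c \<and> c < b)"
  unfolding contains_iff_subseq order_isomorphic_def
  by (auto simp: length_Suc_conv All_less_Suc2) blast

lemma contains_213: "contains s [2,1,3] \<longleftrightarrow> (\<exists>a b c. subseq [a,b,c] s \<and> b < a \<and> a < c)"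
  unfolding contains_iff_subseq order_isomorphic_def
  by (auto simp: length_Suc_conv All_less_Suc2) blast

lemma avoids_132_213_subseq: "avoids_132_213 s \<Longrightarrow> subseq s' s \<Longrightarrow> avoids_132_213 s'"
  unfolding avoids_132_213_def avoids_def using contains_subseq by blast

lemma avoids_132_213_map:
  "strict_mono_on (set s) f \<Longrightarrow> avoids_132_213 (map f s) \<longleftrightarrow> avoids_132_213 s"
  unfolding avoids_132_213_def avoids_def by (simp add: contains_map)

lemma avoids_1243_1324_map:
  "strict_mono_on (set s) f \<Longrightarrow> avoids_1243_1324 (map f s) \<longleftrightarrow> avoids_1243_1324 s"
  unfolding avoids_1243_1324_def avoids_def by (simp add: contains_map)

lemma avoids_132_213_short: "length s < 3 \<Longrightarrow> avoids_132_213 s"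
  unfolding avoids_132_213_def avoids_def by (auto dest: contains_length)

lemma avoids_132_213_imp_avoids_1243_1324: "avoids_132_213 s \<Longrightarrow> avoids_1243_1324 s"
proof -
  have "contains [1,2,4,3] [1,3,2]"
    unfolding contains_132 by (intro exI[of _ 2] exI[of _ 4] exI[of _ 3]) simp
  moreover have "contains [1,3,2,4] [2,1,3]"
    unfolding contains_213 by (intro exI[of _ 3] exI[of _ 2] exI[of _ 4]) simp
  ultimately show "avoids_132_213 s \<Longrightarrow> avoids_1243_1324 s"
    unfolding avoids_132_213_def avoids_1243_1324_def avoids_def by (meson contains_trans)
qed

lemma avoids_1243_1324_Cons:
  "avoids_1243_1324 (x # s) \<longleftrightarrow> avoids_1243_1324 s \<and> avoids_132_213 (filter ((<) x) s)"
proof -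
  have "contains (filter ((<) x) s) [2,4,3] \<longleftrightarrow> contains (filter ((<) x) s) [1,3,2]"
    "contains (filter ((<) x) s) [3,2,4] \<longleftrightarrow> contains (filter ((<) x) s) [2,1,3]"
    using contains_map_pattern[of "[1,3,2]" Suc] contains_map_pattern[of "[2,1,3]" Suc]
    by (simp_all add: strict_mono_on_def eval_nat_numeral)
  then show ?thesis
    unfolding avoids_1243_1324_def avoids_132_213_def avoids_def
    by (auto simp: contains_Cons_min)
qed

lemma avoids_132_213_Cons_greater:
  "\<forall>v\<in>set s. v < x \<Longrightarrow> avoids_132_213 (x # s) \<longleftrightarrow> avoids_132_213 s"
  unfolding avoids_132_213_def avoids_def
  by (simp add: contains_Cons_greater)

lemma contains_132_insert_after_max:
  assumes below: "\<forall>v\<in>set (\<alpha> @ \<beta>). v < a" and "a < m"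
    and "contains (\<alpha> @ a # m # \<beta>) [1,3,2]"
  shows "contains (\<alpha> @ a # \<beta>) [1,3,2]"
proof -
  have m: "m \<notin> set \<alpha>" "m \<notin> set \<beta>" "m \<noteq> a"
    using below \<open>a < m\<close> less_asym by fastforce+
  obtain x y z where occ: "subseq [x,y,z] (\<alpha> @ a # m # \<beta>)" "x < z" "z < y"
    using assms(3) unfolding contains_132 by blast
  show ?thesis
  proof (cases "y = m")
    case True
    \<comment> \<open>m plays the role of 3; the entry a right before it can take over that role\<close>
    have "subseq ([x] @ [m]) ((\<alpha> @ [a]) @ m # \<beta>)" "subseq ([m] @ [z]) ((\<alpha> @ [a]) @ m # \<beta>)"
      using subseq_order.order_trans[OF _ occ(1), of "[x,m]"]
        subseq_order.order_trans[OF _ occ(1), of "[m,z]"] True by simp_all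
    then have "subseq [x] (\<alpha> @ [a])" "subseq [z] \<beta>"
      using m subseq_snoc_split[of "[x]" m "\<alpha> @ [a]" \<beta>] subseq_Cons_split[of m "[z]" "\<alpha> @ [a]" \<beta>]
      by simp_all
    then have "x \<in> set \<alpha> \<or> x = a" "z \<in> set \<beta>" by (auto simp: subseq_singleton_left)
    moreover have "z < a" using below \<open>z \<in> set \<beta>\<close> by simp
    ultimately have "subseq [x,a,z] (\<alpha> @ a # \<beta>)" "x < z" "z < a"
      using occ(2) by (auto simp: subseq_Cons_append subseq_singleton_left)
    then show ?thesis unfolding contains_132 by blast
  next
    case False
    have "x \<le> m" "y \<le> m" "z \<le> m"
      using set_mono_subseq[OF occ(1)] below \<open>a < m\<close> by (auto dest: bspec)
    then have "m \<notin> set [x,y,z]" using False occ by auto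
    then have "subseq [x,y,z] (\<alpha> @ a # \<beta>)" using subseq_removeAll[OF occ(1), of m] m by simp
    then show ?thesis using occ unfolding contains_132 by blast
  qed
qed

lemma contains_213_insert_after_max:
  assumes below: "\<forall>v\<in>set (\<alpha> @ \<beta>). v < a" and "a < m"
    and "contains (\<alpha> @ a # m # \<beta>) [2,1,3]"
  shows "contains (\<alpha> @ a # \<beta>) [2,1,3]"
proof -
  have m: "m \<notin> set \<alpha>" "m \<notin> set \<beta>" "m \<noteq> a" "a \<notin> set \<alpha>"
    using below \<open>a < m\<close> less_asym by fastforce+
  obtain x y z where occ: "subseq [x,y,z] (\<alpha> @ a # m # \<beta>)" "y < x" "x < z"
    using assms(3) unfolding contains_213 by blast
  show ?thesis
  proof (cases "z = m")
    case True
    then have xy: "subseq [x,y] (\<alpha> @ [a])"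
      using occ(1) subseq_snoc_split[of "[x,y]" m "\<alpha> @ [a]" \<beta>] m by simp
    have "x \<noteq> a"
    proof
      assume "x = a"
      then have "subseq [y] []" using xy subseq_Cons_split[of a "[y]" \<alpha> "[]"] m by simp
      then show False by simp
    qed
    with xy below have "x \<in> set \<alpha>" "x < a" by (auto dest: set_mono_subseq)
    then have "subseq [x,y] \<alpha>" using subseq_removeAll[OF xy, of a] m occ(2) by simp
    then have "subseq [x,y,a] (\<alpha> @ a # \<beta>)"
      using list_emb_append_mono[of "(=)" "[x,y]" \<alpha> "[a]" "a # \<beta>"] by simp
    then show ?thesis using occ(2) \<open>x < a\<close> unfolding contains_213 by blast
  next
    case False
    have "x \<le> m" "y \<le> m" "z \<le> m"
      using set_mono_subseq[OF occ(1)] below \<open>a < m\<close> by (auto dest: bspec)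
    then have "m \<notin> set [x,y,z]" using False occ by auto
    then have "subseq [x,y,z] (\<alpha> @ a # \<beta>)" using subseq_removeAll[OF occ(1), of m] m by simp
    then show ?thesis using occ unfolding contains_213 by blast
  qed
qed

lemma avoids_132_213_insert_after_max:
  assumes "\<forall>v\<in>set (\<alpha> @ \<beta>). v < a" and "a < m"
  shows "avoids_132_213 (\<alpha> @ a # m # \<beta>) \<longleftrightarrow> avoids_132_213 (\<alpha> @ a # \<beta>)"
proof
  assume "avoids_132_213 (\<alpha> @ a # m # \<beta>)"
  then show "avoids_132_213 (\<alpha> @ a # \<beta>)"
    by (rule avoids_132_213_subseq) (simp add: subseq_append' list_emb.list_emb_Cons)
next
  assume "avoids_132_213 (\<alpha> @ a # \<beta>)"
  then show "avoids_132_213 (\<alpha> @ a # m # \<beta>)"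
    using contains_132_insert_after_max[OF assms] contains_213_insert_after_max[OF assms]
    unfolding avoids_132_213_def avoids_def by blast
qed

lemma not_avoids_132_213_between:
  assumes "v \<in> set \<alpha> \<union> set \<beta>" and "a < v" and "v < m"
  shows "\<not> avoids_132_213 (\<alpha> @ a # m # \<beta>)"
proof -
  have "contains (\<alpha> @ a # m # \<beta>) [2,1,3]" if "v \<in> set \<alpha>"
    unfolding contains_213 using that assms
    by (intro exI[of _ v] exI[of _ a] exI[of _ m]) (simp add: subseq_Cons_append)
  moreover have "contains (\<alpha> @ a # m # \<beta>) [1,3,2]" if "v \<in> set \<beta>"
    unfolding contains_132 using that assms
    by (intro exI[of _ a] exI[of _ m] exI[of _ v]) (simp add: subseq_drop_many subseq_singleton_left)
  ultimately show ?thesis using assms(1) unfolding avoids_132_213_def avoids_def by blast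
qed

lemma avoids_1243_1324_insert_min:
  assumes "\<forall>v\<in>set (\<alpha> @ \<gamma>). y < v" and "avoids_132_213 (\<alpha> @ \<gamma>)"
  shows "avoids_1243_1324 (\<alpha> @ y # \<gamma>)"
  using assms
proof (induction \<alpha>)
  case Nil
  then have "filter ((<) y) \<gamma> = \<gamma>" by (simp add: filter_True)
  then show ?case using Nil avoids_132_213_imp_avoids_1243_1324 by (simp add: avoids_1243_1324_Cons)
next
  case (Cons x \<alpha>)
  have "avoids_132_213 (\<alpha> @ \<gamma>)"
    using Cons.prems(2) by (rule avoids_132_213_subseq) auto
  then have "avoids_1243_1324 (\<alpha> @ y # \<gamma>)" using Cons.prems(1) Cons.IH by simp
  moreover have "avoids_132_213 (filter ((<) x) (\<alpha> @ y # \<gamma>))"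
    using Cons.prems(1) avoids_132_213_subseq[OF \<open>avoids_132_213 (\<alpha> @ \<gamma>)\<close> subseq_filter_left]
    by simp
  ultimately show ?case by (simp add: avoids_1243_1324_Cons)
qed

lemma avoids_1243_1324_min_max_Cons:
  assumes "x < y" and "\<forall>v\<in>set w. x < v \<and> v < y"
  shows "avoids_1243_1324 (x # y # w) \<longleftrightarrow> avoids_132_213 w"
proof -
  have "filter ((<) x) (y # w) = y # w" using assms by (auto intro: filter_True)
  then have "avoids_1243_1324 (x # y # w) \<longleftrightarrow> avoids_1243_1324 (y # w) \<and> avoids_132_213 (y # w)"
    by (simp only: avoids_1243_1324_Cons[of x])
  moreover have "avoids_132_213 (y # w) \<longleftrightarrow> avoids_132_213 w"
    using assms(2) by (simp add: avoids_132_213_Cons_greater)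
  ultimately show ?thesis using avoids_132_213_imp_avoids_1243_1324 by blast
qed

lemma avoids_1243_1324_second_min_Cons:
  assumes "y < x" and "\<forall>v\<in>set (\<alpha> @ z # \<beta>). x < v"
  shows "avoids_1243_1324 (x # \<alpha> @ y # z # \<beta>) \<longleftrightarrow> avoids_132_213 (\<alpha> @ z # \<beta>)"
proof -
  have "filter ((<) x) (\<alpha> @ y # z # \<beta>) = \<alpha> @ z # \<beta>" using assms by (auto intro: filter_True)
  then have "avoids_1243_1324 (x # \<alpha> @ y # z # \<beta>) \<longleftrightarrow>
      avoids_1243_1324 (\<alpha> @ y # z # \<beta>) \<and> avoids_132_213 (\<alpha> @ z # \<beta>)"
    by (simp only: avoids_1243_1324_Cons[of x])
  moreover have "\<forall>v\<in>set (\<alpha> @ z # \<beta>). y < v" using assms less_trans by blast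
  ultimately show ?thesis using avoids_1243_1324_insert_min[of "\<alpha>" "z # \<beta>" y] by auto
qed

lemma avoids_1243_1324_large_Cons:
  assumes "distinct r" and "set r \<subseteq> {1..n}" and "n \<le> c + 2"
  shows "avoids_1243_1324 (c # r) \<longleftrightarrow> avoids_1243_1324 r"
proof -
  have "length (filter ((<) c) r) = card (set (filter ((<) c) r))"
    using assms(1) by (metis distinct_card distinct_filter)
  also have "\<dots> \<le> card {Suc c..n}" using assms(2) by (intro card_mono) auto
  finally have "length (filter ((<) c) r) \<le> n - c" by simp
  then have "avoids_132_213 (filter ((<) c) r)" using assms(3) by (intro avoids_132_213_short) simp
  then show ?thesis by (simp add: avoids_1243_1324_Cons)
qed


section \<open>Permutations avoiding 132 and 213\<close>

lemma perms_of_insert_max: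
  "\<alpha> @ Suc m # \<beta> \<in> perms_of (Suc m) \<longleftrightarrow> \<alpha> @ \<beta> \<in> perms_of m"
proof -
  have set_eq: "set (\<alpha> @ Suc m # \<beta>) = insert (Suc m) (set (\<alpha> @ \<beta>))" by auto
  have "{1..Suc m} = insert (Suc m) {1..m}" by auto
  then have "set (\<alpha> @ Suc m # \<beta>) = {1..Suc m} \<longleftrightarrow> set (\<alpha> @ \<beta>) = {1..m}"
    if "Suc m \<notin> set (\<alpha> @ \<beta>)"
    unfolding set_eq using that insert_ident[of "Suc m" "set (\<alpha> @ \<beta>)" "{1..m}"] by simp
  moreover have "distinct (\<alpha> @ Suc m # \<beta>) \<longleftrightarrow> distinct (\<alpha> @ \<beta>) \<and> Suc m \<notin> set (\<alpha> @ \<beta>)"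
    by auto
  moreover have "Suc m \<notin> set (\<alpha> @ \<beta>)" if "set (\<alpha> @ \<beta>) = {1..m}" using that by simp
  ultimately show ?thesis unfolding perms_of_def mem_Collect_eq by blast
qed

lemma perms_of_relabel:
  assumes "strict_mono f"
  shows "distinct w \<and> set w = f ` {1..m} \<longleftrightarrow> (\<exists>\<tau>\<in>perms_of m. w = map f \<tau>)"
proof
  have inj: "inj f" using assms by (rule strict_mono_on_imp_inj_on)
  assume w: "distinct w \<and> set w = f ` {1..m}"
  have "map f (map (inv f) w) = w"
    unfolding map_map by (rule map_idI) (use w in \<open>auto simp: inv_f_f[OF inj]\<close>)
  moreover have "map (inv f) w \<in> perms_of m"
    using w inj by (auto simp: perms_of_def distinct_map image_inv_f_f intro: inj_on_inv_into)
  ultimately show "\<exists>\<tau>\<in>perms_of m. w = map f \<tau>" by metis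
next
  assume "\<exists>\<tau>\<in>perms_of m. w = map f \<tau>"
  then show "distinct w \<and> set w = f ` {1..m}"
    using inj_on_subset[OF strict_mono_on_imp_inj_on[OF assms] subset_UNIV]
    by (auto simp: perms_of_def distinct_map)
qed

lemma finite_perms_of: "finite (perms_of n)"
proof (rule finite_subset)
  show "perms_of n \<subseteq> {xs. set xs \<subseteq> {1..n} \<and> length xs = n}"
    by (auto simp: perms_of_def distinct_card[symmetric])
qed (rule finite_lists_length_eq, simp)

definition Av_132_213 :: "nat \<Rightarrow> nat list set" where
  "Av_132_213 m = {s \<in> perms_of m. avoids_132_213 s}"

lemma Av_132_213_relabel:
  assumes "strict_mono f"
  shows "distinct w \<and> set w = f ` {1..m} \<and> avoids_132_213 w \<longleftrightarrow> (\<exists>\<tau>\<in>Av_132_213 m. w = map f \<tau>)"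
proof -
  have "avoids_132_213 (map f \<tau>) \<longleftrightarrow> avoids_132_213 \<tau>" for \<tau>
    using avoids_132_213_map monotone_on_subset[OF assms subset_UNIV] by blast
  then show ?thesis using perms_of_relabel[OF assms, of w m] unfolding Av_132_213_def by auto
qed

lemma Av_132_213_insert_max:
  "\<alpha> @ Suc m # \<beta> \<in> Av_132_213 (Suc m) \<longleftrightarrow> \<alpha> @ \<beta> \<in> Av_132_213 m \<and> (\<alpha> = [] \<or> last \<alpha> = m)"
proof (cases "\<alpha> @ \<beta> \<in> perms_of m")
  case False
  then show ?thesis unfolding Av_132_213_def by (simp add: perms_of_insert_max)
next
  case True
  then have dist: "distinct (\<alpha> @ \<beta>)" and set_eq: "set (\<alpha> @ \<beta>) = {1..m}"
    by (simp_all add: perms_of_def)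
  have "avoids_132_213 (\<alpha> @ Suc m # \<beta>) \<longleftrightarrow> avoids_132_213 (\<alpha> @ \<beta>) \<and> (\<alpha> = [] \<or> last \<alpha> = m)"
  proof (cases \<alpha> rule: rev_cases)
    case Nil
    then show ?thesis using set_eq by (simp add: avoids_132_213_Cons_greater)
  next
    case (snoc \<alpha>' a)
    have a: "a \<in> {1..m}" using set_eq snoc by auto
    show ?thesis
    proof (cases "a = m")
      case True
      have "\<forall>v\<in>set (\<alpha>' @ \<beta>). v < a"
        using set_eq dist snoc True by fastforce
      then show ?thesis
        using avoids_132_213_insert_after_max[of \<alpha>' \<beta> a "Suc m"] snoc True by simp
    next
      case False
      then have "m \<in> set \<alpha>' \<union> set \<beta>" "a < m" using set_eq snoc a by auto
      then show ?thesis
        using not_avoids_132_213_between[of m \<alpha>' \<beta> a "Suc m"] snoc False by simp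
    qed
  qed
  then show ?thesis using True unfolding Av_132_213_def by (simp add: perms_of_insert_max)
qed

lemma Av_132_213_Suc_split:
  assumes "\<tau> \<in> Av_132_213 (Suc m)"
  obtains \<alpha> \<beta> where "\<tau> = \<alpha> @ Suc m # \<beta>"
  using assms split_list[of "Suc m" \<tau>] by (auto simp: Av_132_213_def perms_of_def)

lemma remove_max_insert_max:
  assumes "\<alpha> @ Suc m # \<beta> \<in> Av_132_213 (Suc m)"
  shows "(removeAll (Suc m) (\<alpha> @ Suc m # \<beta>), hd (\<alpha> @ Suc m # \<beta>) = Suc m) = (\<alpha> @ \<beta>, \<alpha> = [])"
proof -
  have "Suc m \<notin> set \<alpha>" "Suc m \<notin> set \<beta>"
    using assms by (auto simp: Av_132_213_def perms_of_def)
  then show ?thesis by (cases \<alpha>) auto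
qed

lemma inj_on_remove_max: "inj_on (\<lambda>\<tau>. (removeAll (Suc m) \<tau>, hd \<tau> = Suc m)) (Av_132_213 (Suc m))"
proof (rule inj_onI)
  fix \<tau>1 \<tau>2
  assume \<tau>1: "\<tau>1 \<in> Av_132_213 (Suc m)" and \<tau>2: "\<tau>2 \<in> Av_132_213 (Suc m)"
    and eq: "(removeAll (Suc m) \<tau>1, hd \<tau>1 = Suc m) = (removeAll (Suc m) \<tau>2, hd \<tau>2 = Suc m)"
  obtain \<alpha>1 \<beta>1 \<alpha>2 \<beta>2 where \<tau>: "\<tau>1 = \<alpha>1 @ Suc m # \<beta>1" "\<tau>2 = \<alpha>2 @ Suc m # \<beta>2"
    using Av_132_213_Suc_split \<tau>1 \<tau>2 by metis
  then have rest: "\<alpha>1 @ \<beta>1 = \<alpha>2 @ \<beta>2" and empty: "\<alpha>1 = [] \<longleftrightarrow> \<alpha>2 = []"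
    using eq remove_max_insert_max \<tau>1 \<tau>2 by simp_all
  have last: "\<alpha>1 = [] \<or> last \<alpha>1 = m" "\<alpha>2 = [] \<or> last \<alpha>2 = m"
    and dist: "distinct (\<alpha>1 @ \<beta>1)"
    using \<tau>1 \<tau>2 \<tau> Av_132_213_insert_max by (auto simp: Av_132_213_def perms_of_def)
  show "\<tau>1 = \<tau>2"
  proof (cases "\<alpha>1 = []")
    case False
    then obtain \<alpha>1' \<alpha>2' where \<alpha>: "\<alpha>1 = \<alpha>1' @ [m]" "\<alpha>2 = \<alpha>2' @ [m]"
      using last empty by (metis append_butlast_last_id)
    have "m \<notin> set \<alpha>1'" "m \<notin> set \<beta>1" using dist \<alpha>(1) by simp_all
    then show ?thesis using \<alpha> rest \<tau> by (simp add: append_Cons_eq_iff)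
  qed (use \<tau> rest empty in simp)
qed

lemma card_Av_132_213_Suc:
  assumes "1 \<le> m"
  shows "card (Av_132_213 (Suc m)) = 2 * card (Av_132_213 m)"
proof -
  let ?f = "\<lambda>\<tau>. (removeAll (Suc m) \<tau>, hd \<tau> = Suc m)"
  have "?f ` Av_132_213 (Suc m) = Av_132_213 m \<times> UNIV"
  proof
    show "?f ` Av_132_213 (Suc m) \<subseteq> Av_132_213 m \<times> UNIV"
    proof (rule image_subsetI)
      fix \<tau> assume \<tau>: "\<tau> \<in> Av_132_213 (Suc m)"
      then obtain \<alpha> \<beta> where "\<tau> = \<alpha> @ Suc m # \<beta>" by (rule Av_132_213_Suc_split)
      then show "?f \<tau> \<in> Av_132_213 m \<times> UNIV"
        using \<tau> remove_max_insert_max Av_132_213_insert_max by simp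
    qed
  next
    show "Av_132_213 m \<times> UNIV \<subseteq> ?f ` Av_132_213 (Suc m)"
    proof (clarify)
      fix \<tau>' b assume \<tau>': "\<tau>' \<in> Av_132_213 m"
      obtain \<alpha> \<beta> where \<alpha>: "\<tau>' = \<alpha> @ \<beta>" "\<alpha> = [] \<longleftrightarrow> b" "\<alpha> = [] \<or> last \<alpha> = m"
      proof (cases b)
        case False
        have "m \<in> set \<tau>'" using \<tau>' assms by (simp add: Av_132_213_def perms_of_def)
        then obtain \<alpha>' \<beta> where "\<tau>' = \<alpha>' @ m # \<beta>" by (meson split_list)
        then show thesis using that[of "\<alpha>' @ [m]" \<beta>] False by simp
      qed (use that in simp)
      then have \<tau>: "\<alpha> @ Suc m # \<beta> \<in> Av_132_213 (Suc m)" using \<tau>' Av_132_213_insert_max by simp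
      show "(\<tau>', b) \<in> ?f ` Av_132_213 (Suc m)"
        by (rule image_eqI[OF _ \<tau>]) (use remove_max_insert_max[OF \<tau>] \<alpha> in simp)
    qed
  qed
  then have "bij_betw ?f (Av_132_213 (Suc m)) (Av_132_213 m \<times> UNIV)"
    using inj_on_remove_max by (rule bij_betw_imageI[rotated])
  then have "card (Av_132_213 (Suc m)) = card (Av_132_213 m \<times> (UNIV :: bool set))"
    by (rule bij_betw_same_card)
  then show ?thesis by (simp add: card_cartesian_product)
qed

lemma card_Av_132_213: "1 \<le> m \<Longrightarrow> card (Av_132_213 m) = 2 ^ (m - 1)"
proof (induction m rule: nat_induct_at_least)
  case base
  have "s = [1]" if "s \<in> perms_of 1" for s
  proof -
    have "length s = 1" using that distinct_card[of s] by (simp add: perms_of_def)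
    then obtain a where "s = [a]" by (metis One_nat_def length_0_conv length_Suc_conv)
    then show ?thesis using that by (simp add: perms_of_def)
  qed
  moreover have "[1] \<in> perms_of 1" by (simp add: perms_of_def)
  ultimately have "perms_of 1 = {[1]}" by blast
  then have "Av_132_213 1 = {[1]}"
    unfolding Av_132_213_def using avoids_132_213_short[of "[1]"] by auto
  then show ?case by simp
next
  case (Suc m)
  then show ?case by (simp add: card_Av_132_213_Suc power_eq_if)
qed


section \<open>Permutations with 1 immediately before the maximum\<close>

lemma pos_nth: "distinct s \<Longrightarrow> i < length s \<Longrightarrow> pos s (s ! i) = i"
  unfolding pos_def by (rule Least_equality) (auto simp: nth_eq_iff_index_eq)

lemma pos_Suc_iff_sublist:
  assumes "distinct s" and "x \<in> set s" and "y \<in> set s"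
  shows "pos s y = Suc (pos s x) \<longleftrightarrow> sublist [x, y] s"
proof
  obtain i j where i: "i < length s" "s ! i = x" and j: "j < length s" "s ! j = y"
    using assms(2,3) by (auto simp: in_set_conv_nth)
  assume "pos s y = Suc (pos s x)"
  then have "j = Suc i" using pos_nth[OF assms(1) i(1)] pos_nth[OF assms(1) j(1)] i(2) j(2) by simp
  then have "s = take i s @ [x, y] @ drop (Suc j) s"
    using id_take_nth_drop[OF i(1)] Cons_nth_drop_Suc[OF j(1)] i(2) j(2) by simp
  then show "sublist [x, y] s" unfolding sublist_def by blast
next
  assume "sublist [x, y] s"
  then obtain ps ss where s: "s = ps @ x # y # ss" unfolding sublist_def by auto
  then have "pos s x = length ps" "pos s y = Suc (length ps)"
    using pos_nth[OF assms(1), of "length ps"] pos_nth[OF assms(1), of "Suc (length ps)"]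
    by (simp_all add: nth_append)
  then show "pos s y = Suc (pos s x)" by simp
qed

definition one_before_max :: "nat \<Rightarrow> nat list set" where
  "one_before_max n = {s \<in> perms_of n. avoids_1243_1324 s \<and> sublist [1, n] s}"

lemma t_eq_card:
  assumes "1 \<le> n"
  shows "t n l = card {s \<in> one_before_max n. s ! 0 = l}"
proof -
  have "pos s n = pos s 1 + 1 \<longleftrightarrow> sublist [1, n] s" if "s \<in> perms_of n" for s
    using that assms pos_Suc_iff_sublist[of s 1 n] by (auto simp: perms_of_def)
  then show ?thesis
    unfolding t_def one_before_max_def avoids_1243_1324_def
    by (intro arg_cong[where f = card] Collect_cong) blast
qed

lemma sum_t_eq_card:
  assumes "2 \<le> n"
  shows "(\<Sum>l = 1..n - 1. t n l) = card (one_before_max n)"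
proof -
  have "s ! 0 \<in> {1..n - 1}" if "s \<in> one_before_max n" for s
  proof -
    have "distinct s" "set s = {1..n}" "sublist [1, n] s"
      using that by (auto simp: one_before_max_def perms_of_def)
    moreover obtain ps ss where s: "s = ps @ 1 # n # ss"
      using \<open>sublist [1, n] s\<close> unfolding sublist_def by auto
    ultimately have "s ! 0 \<in> {1..n}" "s ! 0 \<noteq> n"
      using assms by (cases ps; force)+
    then show ?thesis by auto
  qed
  then have "card (one_before_max n) = (\<Sum>l = 1..n - 1. card {s \<in> one_before_max n. s ! 0 = l})"
    unfolding card_eq_sum
    by (intro sum.group[symmetric]) (auto simp: one_before_max_def finite_perms_of)
  then show ?thesis using assms by (simp add: t_eq_card)
qed

lemma one_before_max_relabel:
  assumes "strict_mono f" and "f 1 = 1" and "f m = n"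
  shows "distinct r \<and> set r = f ` {1..m} \<and> avoids_1243_1324 r \<and> sublist [1, n] r \<longleftrightarrow>
    (\<exists>\<pi>\<in>one_before_max m. r = map f \<pi>)"
proof -
  have "avoids_1243_1324 (map f \<pi>) \<longleftrightarrow> avoids_1243_1324 \<pi>" for \<pi>
    using avoids_1243_1324_map monotone_on_subset[OF assms(1) subset_UNIV] by blast
  moreover have "sublist [1, n] (map f \<pi>) \<longleftrightarrow> sublist [1, m] \<pi>" for \<pi>
    using sublist_map_inj[OF strict_mono_on_imp_inj_on[OF assms(1)], of "[1, m]" \<pi>] assms(2,3)
    by simp
  ultimately show ?thesis
    using perms_of_relabel[OF assms(1), of r m] unfolding one_before_max_def by auto
qed

lemma one_before_max_starting_1:
  assumes "2 \<le> n"
  shows "{s \<in> one_before_max n. s ! 0 = 1} =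
    (\<lambda>w. 1 # n # w) ` {w. distinct w \<and> set w = {2..n - 1} \<and> avoids_132_213 w}"
proof -
  have "s \<in> one_before_max n \<and> s ! 0 = 1 \<longleftrightarrow>
      (\<exists>w. s = 1 # n # w \<and> distinct w \<and> set w = {2..n - 1} \<and> avoids_132_213 w)"
    (is "?L \<longleftrightarrow> ?R") for s
  proof
    assume s: ?L
    then have "distinct s" "set s = {1..n}" "avoids_1243_1324 s" "sublist [1, n] s"
      by (auto simp: one_before_max_def perms_of_def)
    moreover obtain ps w where "s = ps @ 1 # n # w"
      using \<open>sublist [1, n] s\<close> unfolding sublist_def by auto
    moreover have "ps = []" using s calculation by (cases ps) auto
    ultimately have s: "s = 1 # n # w" "distinct (1 # n # w)" "set (1 # n # w) = {1..n}"
      and "avoids_1243_1324 (1 # n # w)" by auto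
    then have "set w = {1..n} - {1, n}" by auto
    moreover have "{1..n} - {1, n} = {2..n - 1}" by auto
    moreover have "avoids_132_213 w"
      using avoids_1243_1324_min_max_Cons[of 1 n w] \<open>avoids_1243_1324 (1 # n # w)\<close> assms
        \<open>set w = {1..n} - {1, n}\<close> by auto
    ultimately show ?R using s by auto
  next
    assume ?R
    then obtain w where "s = [1, n] @ w" "distinct w" "set w = {2..n - 1}" "avoids_132_213 w"
      by auto
    moreover have "\<forall>v\<in>set w. 1 < v \<and> v < n" using calculation(3) by auto
    ultimately show ?L
      using assms avoids_1243_1324_min_max_Cons[of 1 n w]
      by (auto simp: one_before_max_def perms_of_def)
  qed
  then show ?thesis by auto
qed

lemma card_one_before_max_starting_1:
  assumes "2 \<le> n"
  shows "card {s \<in> one_before_max n. s ! 0 = 1} = card (Av_132_213 (n - 2))"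
proof -
  have labels: "Suc ` {1..n - 2} = {2..n - 1}" using assms by auto
  have "distinct w \<and> set w = {2..n - 1} \<and> avoids_132_213 w \<longleftrightarrow>
      (\<exists>\<tau>\<in>Av_132_213 (n - 2). w = map Suc \<tau>)" for w
    unfolding labels[symmetric] by (rule Av_132_213_relabel) (simp add: strict_mono_Suc_iff)
  then have "{w. distinct w \<and> set w = {2..n - 1} \<and> avoids_132_213 w} = map Suc ` Av_132_213 (n - 2)"
    by blast
  then show ?thesis
    unfolding one_before_max_starting_1[OF assms] by (simp add: card_image inj_on_def)
qed

lemma card_insert_before:
  assumes "\<forall>w\<in>W. distinct w \<and> y \<in> set w \<and> x \<notin> set w"
  shows "card {\<alpha> @ x # y # \<beta> | \<alpha> \<beta>. \<alpha> @ y # \<beta> \<in> W} = card W"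
proof (rule bij_betw_same_card[of "removeAll x"], rule bij_betw_imageI)
  have remove: "removeAll x (\<alpha> @ x # y # \<beta>) = \<alpha> @ y # \<beta>" if "\<alpha> @ y # \<beta> \<in> W" for \<alpha> \<beta>
    using that assms by (auto simp: removeAll_id)
  show "inj_on (removeAll x) {\<alpha> @ x # y # \<beta> | \<alpha> \<beta>. \<alpha> @ y # \<beta> \<in> W}"
  proof (rule inj_onI, clarify)
    fix \<alpha>1 \<beta>1 \<alpha>2 \<beta>2
    assume w: "\<alpha>1 @ y # \<beta>1 \<in> W" "\<alpha>2 @ y # \<beta>2 \<in> W"
      and "removeAll x (\<alpha>1 @ x # y # \<beta>1) = removeAll x (\<alpha>2 @ x # y # \<beta>2)"
    then have "\<alpha>1 @ y # \<beta>1 = \<alpha>2 @ y # \<beta>2" using remove by simp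
    moreover have "y \<notin> set \<alpha>1" "y \<notin> set \<beta>1" using w(1) assms by auto
    ultimately show "\<alpha>1 @ x # y # \<beta>1 = \<alpha>2 @ x # y # \<beta>2" by (simp add: append_Cons_eq_iff)
  qed
  show "removeAll x ` {\<alpha> @ x # y # \<beta> | \<alpha> \<beta>. \<alpha> @ y # \<beta> \<in> W} = W"
  proof
    show "removeAll x ` {\<alpha> @ x # y # \<beta> | \<alpha> \<beta>. \<alpha> @ y # \<beta> \<in> W} \<subseteq> W" using remove by auto
  next
    show "W \<subseteq> removeAll x ` {\<alpha> @ x # y # \<beta> | \<alpha> \<beta>. \<alpha> @ y # \<beta> \<in> W}"
    proof
      fix w assume "w \<in> W"
      moreover obtain \<alpha> \<beta> where "w = \<alpha> @ y # \<beta>"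
        using \<open>w \<in> W\<close> assms split_list[of y w] by blast
      ultimately show "w \<in> removeAll x ` {\<alpha> @ x # y # \<beta> | \<alpha> \<beta>. \<alpha> @ y # \<beta> \<in> W}"
        using remove by (intro image_eqI[of w _ "\<alpha> @ x # y # \<beta>"]) auto
    qed
  qed
qed

lemma one_before_max_starting_2:
  assumes "3 \<le> n"
  shows "{s \<in> one_before_max n. s ! 0 = 2} =
    Cons 2 ` {\<alpha> @ 1 # n # \<beta> | \<alpha> \<beta>. \<alpha> @ n # \<beta> \<in> {w. distinct w \<and> set w = {3..n} \<and> avoids_132_213 w}}"
proof -
  have "s \<in> one_before_max n \<and> s ! 0 = 2 \<longleftrightarrow> (\<exists>\<alpha> \<beta>. s = 2 # \<alpha> @ 1 # n # \<beta> \<and>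
      distinct (\<alpha> @ n # \<beta>) \<and> set (\<alpha> @ n # \<beta>) = {3..n} \<and> avoids_132_213 (\<alpha> @ n # \<beta>))"
    (is "?L \<longleftrightarrow> ?R") for s
  proof
    assume s: ?L
    then have "distinct s" "set s = {1..n}" "avoids_1243_1324 s" "sublist [1, n] s"
      by (auto simp: one_before_max_def perms_of_def)
    obtain ps \<beta> where ps: "s = ps @ 1 # n # \<beta>"
      using \<open>sublist [1, n] s\<close> unfolding sublist_def by auto
    then obtain \<alpha> where s\<alpha>: "s = 2 # \<alpha> @ 1 # n # \<beta>" using s by (cases ps) auto
    then have d: "distinct (2 # \<alpha> @ 1 # n # \<beta>)" and set_s: "set (2 # \<alpha> @ 1 # n # \<beta>) = {1..n}"
      and av: "avoids_1243_1324 (2 # \<alpha> @ 1 # n # \<beta>)"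
      using \<open>distinct s\<close> \<open>set s = {1..n}\<close> \<open>avoids_1243_1324 s\<close> by simp_all
    have "set (\<alpha> @ n # \<beta>) = set (2 # \<alpha> @ 1 # n # \<beta>) - {1, 2}" using d by auto
    also have "\<dots> = {3..n}" unfolding set_s by auto
    finally have w: "distinct (\<alpha> @ n # \<beta>)" "set (\<alpha> @ n # \<beta>) = {3..n}" using d by auto
    then have "avoids_132_213 (\<alpha> @ n # \<beta>)"
      using av avoids_1243_1324_second_min_Cons[of 1 2 \<alpha> n \<beta>] by simp
    with w s\<alpha> show ?R by (intro exI[of _ \<alpha>] exI[of _ \<beta>]) simp
  next
    assume ?R
    then obtain \<alpha> \<beta> where s: "s = 2 # \<alpha> @ 1 # n # \<beta>" and w: "distinct (\<alpha> @ n # \<beta>)"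
      "set (\<alpha> @ n # \<beta>) = {3..n}" "avoids_132_213 (\<alpha> @ n # \<beta>)" by auto
    have "set s = {1, 2} \<union> set (\<alpha> @ n # \<beta>)" using s by auto
    also have "\<dots> = {1..n}" unfolding w(2) using assms by (auto simp: atLeastAtMost_iff)
    finally have "set s = {1..n}" .
    moreover have "distinct s" using s w by auto
    moreover have "avoids_1243_1324 s"
      using s w avoids_1243_1324_second_min_Cons[of 1 2 \<alpha> n \<beta>] by auto
    moreover have "sublist [1, n] s" unfolding s sublist_def by (metis append_Cons append_Nil)
    ultimately show ?L using s by (simp add: one_before_max_def perms_of_def)
  qed
  then show ?thesis by auto
qed

lemma card_one_before_max_starting_2:
  assumes "3 \<le> n"
  shows "card {s \<in> one_before_max n. s ! 0 = 2} = card (Av_132_213 (n - 2))"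
proof -
  let ?W = "{w. distinct w \<and> set w = {3..n} \<and> avoids_132_213 w}"
  have "(\<lambda>v. v + 2) ` {1..n - 2} = {3..n}"
    using image_add_atLeastAtMost'[of 2 1 "n - 2"] assms by simp
  then have W: "?W = map (\<lambda>v. v + 2) ` Av_132_213 (n - 2)"
    using Av_132_213_relabel[of "\<lambda>v. v + 2" _ "n - 2"] by (auto simp: strict_mono_def)
  have "card {s \<in> one_before_max n. s ! 0 = 2} = card {\<alpha> @ 1 # n # \<beta> | \<alpha> \<beta>. \<alpha> @ n # \<beta> \<in> ?W}"
    unfolding one_before_max_starting_2[OF assms] by (simp add: card_image)
  also have "\<dots> = card ?W" using assms by (intro card_insert_before) auto
  also have "\<dots> = card (Av_132_213 (n - 2))" unfolding W by (simp add: card_image inj_on_def)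
  finally show ?thesis .
qed

lemma one_before_max_starting_large:
  assumes "2 \<le> c" and "c < n" and "n \<le> c + 2"
  shows "{s \<in> one_before_max n. s ! 0 = c} =
    Cons c ` {r. distinct r \<and> set r = {1..n} - {c} \<and> avoids_1243_1324 r \<and> sublist [1, n] r}"
proof -
  have "s \<in> one_before_max n \<and> s ! 0 = c \<longleftrightarrow>
      (\<exists>r. s = c # r \<and> distinct r \<and> set r = {1..n} - {c} \<and> avoids_1243_1324 r \<and> sublist [1, n] r)"
    (is "?L \<longleftrightarrow> ?R") for s
  proof
    assume s: ?L
    then have "distinct s" "set s = {1..n}" "avoids_1243_1324 s" "sublist [1, n] s"
      by (auto simp: one_before_max_def perms_of_def)
    obtain ps w where ps: "s = ps @ 1 # n # w"
      using \<open>sublist [1, n] s\<close> unfolding sublist_def by auto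
    then have "s \<noteq> []" by simp
    then obtain a r where "s = a # r" by (meson list.exhaust)
    then have sr: "s = c # r" using s by simp
    then have "distinct (c # r)" "set (c # r) = {1..n}" "avoids_1243_1324 (c # r)"
      using \<open>distinct s\<close> \<open>set s = {1..n}\<close> \<open>avoids_1243_1324 s\<close> by simp_all
    moreover have "sublist [1, n] r" using ps sr assms by (cases ps) (auto simp: sublist_def)
    ultimately have r: "distinct r" "c \<notin> set r" "set r \<subseteq> {1..n}" "avoids_1243_1324 r"
      "sublist [1, n] r" using avoids_1243_1324_large_Cons[of r n c] assms by auto
    have "set r = {1..n} - {c}"
      using \<open>set (c # r) = {1..n}\<close> r(2) by (metis Diff_insert_absorb list.simps(15))
    with r sr show ?R by (intro exI[of _ r]) simp
  next
    assume ?R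
    then obtain r where r: "s = c # r" "distinct r" "set r = {1..n} - {c}" "avoids_1243_1324 r"
      "sublist [1, n] r" by blast
    then have "distinct (c # r)" "set (c # r) = {1..n}" using assms by (simp_all add: insert_absorb)
    moreover have "avoids_1243_1324 (c # r)"
      using r avoids_1243_1324_large_Cons[of r n c] assms by (simp add: Diff_subset)
    moreover have "sublist [1, n] (c # r)" using r(5) by (simp add: sublist_Cons_right)
    ultimately show ?L using r(1) by (simp add: one_before_max_def perms_of_def)
  qed
  then show ?thesis by auto
qed

lemma card_one_before_max_starting_large:
  assumes "2 \<le> c" and "c < n" and "n \<le> c + 2"
  shows "card {s \<in> one_before_max n. s ! 0 = c} = card (one_before_max (n - 1))"
proof -
  define f where "f u = (if c \<le> u then Suc u else u)" for u
  have mono: "strict_mono f" by (auto simp: strict_mono_def f_def)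
  have "f ` {1..n - 1} = {1..n} - {c}"
  proof (intro set_eqI iffI)
    fix v assume "v \<in> f ` {1..n - 1}"
    then show "v \<in> {1..n} - {c}" using assms by (auto simp: f_def)
  next
    fix v assume v: "v \<in> {1..n} - {c}"
    show "v \<in> f ` {1..n - 1}"
    proof (cases "v < c")
      case True
      then show ?thesis using v assms by (intro image_eqI[of v f v]) (auto simp: f_def)
    next
      case False
      then show ?thesis using v assms by (intro image_eqI[of v f "v - 1"]) (auto simp: f_def)
    qed
  qed
  moreover have "f 1 = 1" "f (n - 1) = n" using assms by (auto simp: f_def)
  ultimately have "{r. distinct r \<and> set r = {1..n} - {c} \<and> avoids_1243_1324 r \<and> sublist [1, n] r} =
      map f ` one_before_max (n - 1)"
    using one_before_max_relabel[OF mono, of "n - 1" n] by auto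
  moreover have "inj (map f)" using strict_mono_on_imp_inj_on[OF mono] by (rule inj_mapI)
  ultimately show ?thesis
    unfolding one_before_max_starting_large[OF assms]
    using card_image[OF inj_on_subset[of "map f" UNIV "one_before_max (n - 1)"]]
    by (simp add: card_image)
qed

theorem lemma5p4:
  fixes n :: nat
  assumes "n \<ge> 3"
  shows "t n 1 = 2 ^ (n - 3) \<and> t n 2 = 2 ^ (n - 3) \<and>
         t n (n - 2) = (\<Sum>l = 1..n - 2. t (n - 1) l) \<and>
         t n (n - 1) = (\<Sum>l = 1..n - 2. t (n - 1) l)"
proof -
  have card_Av: "card (Av_132_213 (n - 2)) = 2 ^ (n - 3)"
    using card_Av_132_213[of "n - 2"] assms by (simp add: numeral_3_eq_3)
  have sum_eq: "(\<Sum>l = 1..n - 2. t (n - 1) l) = card (one_before_max (n - 1))"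
    using sum_t_eq_card[of "n - 1"] assms by (simp add: numeral_2_eq_2)
  have t1: "t n 1 = 2 ^ (n - 3)"
    using t_eq_card card_one_before_max_starting_1 card_Av assms by simp
  moreover have t2: "t n 2 = 2 ^ (n - 3)"
    using t_eq_card card_one_before_max_starting_2 card_Av assms by simp
  moreover have large: "t n c = (\<Sum>l = 1..n - 2. t (n - 1) l)"
    if "2 \<le> c" and "n - 2 \<le> c" and "c \<le> n - 1" for c
    using t_eq_card card_one_before_max_starting_large[of c n] sum_eq that assms by simp
  moreover have "t n (n - 2) = (\<Sum>l = 1..n - 2. t (n - 1) l)"
  proof (cases "n = 3")
    case True
    then show ?thesis using t1 t2 large[of 2] by simp
  qed (use large assms in simp)
  ultimately show ?thesis using large assms by simp
qed

end
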